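(* Let $(X,\wedge,\vee,\bot,\top)$ be a bounded lattice which is not distributive. Then there exists a sequence $x=(x_1,x_2,x_3)$ of elements of $X$ such that the identity $$P_3(k)=P_{2}(k)\wedge\bigl(P_{2}(k-1)\vee x_3\bigr)$$ fails for some $k\in\{1,2,3\}$, where for $0\le m\le 3$ and $0\le k\le m+1$ $$P_m(k)=\begin{cases}\bot & k=0,\\ \bigwedge_{I\subseteq\{1,\ldots,m\},\ |I|=k}\ \bigvee_{i\in I} x_i & 1\le k\le m,\\ \top & k=m+1.\end{cases}$$
   Context: $\bot$ and $\top$ denote the least and greatest elements of $X$. For $1\le k\le m$, $P_m(k)$ is the $k$-th element of $(x_1,\ldots,x_m)$ sorted with respect to the lattice (meet over $k$-element index subsets of the join of the corresponding entries). *)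

theory Defs
  imports Main
begin

definition P :: "(nat \<Rightarrow> 'a::bounded_lattice) \<Rightarrow> nat \<Rightarrow> nat \<Rightarrow> 'a" where
  "P x m k = (if k = 0 then bot
     else if k \<le> m then
       Inf_fin ((\<lambda>I. Sup_fin (x ` I)) ` {I. I \<subseteq> {1..m} \<and> card I = k})
     else top)"

end

theory Submission
  imports Defs
begin

text \<open>For k = 2 the identity says that the median
  (a \<squnion> b) \<sqinter> (a \<squnion> c) \<sqinter> (b \<squnion> c) equals (a \<squnion> b) \<sqinter> ((a \<sqinter> b) \<squnion> c).
  Instantiating this with c \<le> a yields the modular law; applying it to b, c and
  a' = a \<sqinter> (b \<squnion> c), once in each order, gives a' \<le> (a' \<sqinter> b) \<squnion> c, from which the
  modular law produces a' = (a \<sqinter> b) \<squnion> (a \<sqinter> c).\<close>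

lemma modular_if_median_identity:
  fixes u v w :: "'a::lattice"
  assumes median: "\<And>a b c :: 'a. inf (inf (sup a b) (sup a c)) (sup b c) = inf (sup a b) (sup (inf a b) c)"
    and "w \<le> u"
  shows "inf u (sup v w) = sup (inf u v) w"
proof -
  have "inf (inf (sup u v) (sup u w)) (sup v w) = inf u (sup v w)"
    using \<open>w \<le> u\<close> by (simp add: sup.absorb1 inf.absorb2)
  moreover have "inf (sup u v) (sup (inf u v) w) = sup (inf u v) w"
    using \<open>w \<le> u\<close> by (simp add: inf.absorb2 le_supI1 le_supI2)
  ultimately show ?thesis
    using median[of u v w] by simp
qed

lemma distrib_if_median_identity:
  fixes a b c :: "'a::lattice"
  assumes median: "\<And>a b c :: 'a. inf (inf (sup a b) (sup a c)) (sup b c) = inf (sup a b) (sup (inf a b) c)"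
  shows "inf a (sup b c) = sup (inf a b) (inf a c)"
proof -
  define a' where "a' = inf a (sup b c)"
  have a'_le: "a' \<le> sup b c"
    unfolding a'_def by simp
  have "sup (inf b c) a' = inf (sup b c) (sup (inf b c) a')"
    using a'_le by (simp add: inf.absorb2 le_supI1)
  also have "\<dots> = inf (inf (sup a' b) (sup a' c)) (sup b c)"
    using median[of b c a'] by (simp add: ac_simps)
  also have "\<dots> = inf (sup a' b) (sup (inf a' b) c)"
    by (rule median)
  also have "\<dots> \<le> sup (inf a' b) c"
    by simp
  finally have "a' = inf a' (sup c (inf a' b))"
    by (simp add: inf.absorb1 sup.commute)
  also have "\<dots> = sup (inf a' c) (inf a' b)"
    by (rule modular_if_median_identity[OF median]) simp
  finally have "a' = sup (inf a' b) (inf a' c)"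
    by (simp add: sup.commute)
  moreover have "inf a' b = inf a b" and "inf a' c = inf a c"
    by (simp_all add: a'_def inf_assoc inf.absorb2)
  ultimately show ?thesis
    unfolding a'_def by simp
qed

lemma P_2_1: "P x 2 1 = inf (x 1) (x 2)"
proof -
  have "{I. I \<subseteq> {1..2::nat} \<and> card I = 1} = {I \<in> Pow {1, 2}. card I = 1}"
    by auto
  also have "\<dots> = {{1}, {2}}"
    by (simp add: Pow_insert) auto
  finally show ?thesis
    by (simp add: P_def)
qed

lemma P_2_2: "P x 2 2 = sup (x 1) (x 2)"
proof -
  have "{I. I \<subseteq> {1..2::nat} \<and> card I = 2} = {I \<in> Pow {1, 2}. card I = 2}"
    by auto
  also have "\<dots> = {{1, 2}}"
    by (simp add: Pow_insert) auto
  finally show ?thesis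
    by (simp add: P_def)
qed

lemma P_3_2: "P x 3 2 = inf (inf (sup (x 1) (x 2)) (sup (x 1) (x 3))) (sup (x 2) (x 3))"
proof -
  have "{1..3::nat} = {1, 2, 3}"
    by auto
  then have "{I. I \<subseteq> {1..3::nat} \<and> card I = 2} = {I \<in> Pow {1, 2, 3}. card I = 2}"
    by auto
  also have "\<dots> = {{1, 2}, {1, 3}, {2, 3}}"
    by (simp add: Pow_insert) auto
  finally show ?thesis
    by (simp add: P_def ac_simps)
qed

theorem proposition3p2:
  assumes "\<not> (\<forall>a b c :: 'a::bounded_lattice. inf a (sup b c) = sup (inf a b) (inf a c))"
  shows "\<exists>x :: nat \<Rightarrow> 'a. \<exists>k \<in> {1..3}.
           P x 3 k \<noteq> inf (P x 2 k) (sup (P x 2 (k - 1)) (x 3))"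
proof (rule ccontr)
  assume "\<not> ?thesis"
  then have recursion: "P x 3 2 = inf (P x 2 2) (sup (P x 2 1) (x 3))" for x :: "nat \<Rightarrow> 'a"
    by force
  have "inf (inf (sup a b) (sup a c)) (sup b c) = inf (sup a b) (sup (inf a b) c)" for a b c :: 'a
    using recursion[of "\<lambda>i. if i = 1 then a else if i = 2 then b else c"]
    unfolding P_2_1 P_2_2 P_3_2 by simp
  then show False
    using assms distrib_if_median_identity by blast
qed

end
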